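(* Let $f \in C((0,\infty);(0,\infty))$ be asymptotically increasing with $\lim_{x\to\infty} f(x)/x = \infty$, and define $\bar F(x) = \int_0^x f(s)\,ds$ for $x>0$. Then $\bar F$ preserves superexponential growth.
   Context: "$f$ is asymptotically increasing" means that there is a continuous increasing function $\phi:(0,\infty)\to(0,\infty)$ with $f(x)/\phi(x)\to 1$ as $x\to\infty$. A function $g \in C((0,\infty);(0,\infty))$ exhibits superexponential growth if $g(x)\to\infty$ as $x\to\infty$ and $\lim_{x\to\infty} g(x-\epsilon)/g(x) = 0$ for each $\epsilon>0$. A function $\phi \in C((0,\infty);(0,\infty))$ preserves superexponential growth if for every $g$ exhibiting superexponential growth and every $\epsilon>0$, $\lim_{x\to\infty}\phi(g(x-\epsilon))/\phi(g(x)) = 0$. *)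

theory Defs
  imports "HOL-Analysis.Analysis"
begin

definition pos_cont :: "(real \<Rightarrow> real) \<Rightarrow> bool" where
  "pos_cont f \<longleftrightarrow> continuous_on {0<..} f \<and> (\<forall>x>0. f x > 0)"

definition asymp_increasing :: "(real \<Rightarrow> real) \<Rightarrow> bool" where
  "asymp_increasing f \<longleftrightarrow>
     (\<exists>\<phi>. pos_cont \<phi> \<and> mono_on {0<..} \<phi> \<and> ((\<lambda>x. f x / \<phi> x) \<longlongrightarrow> 1) at_top)"

definition superexp_growth :: "(real \<Rightarrow> real) \<Rightarrow> bool" where
  "superexp_growth g \<longleftrightarrow> pos_cont g \<and> filterlim g at_top at_top \<and>
     (\<forall>\<epsilon>>0. ((\<lambda>x. g (x - \<epsilon>) / g x) \<longlongrightarrow> 0) at_top)"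

definition preserves_superexp :: "(real \<Rightarrow> real) \<Rightarrow> bool" where
  "preserves_superexp \<phi> \<longleftrightarrow> pos_cont \<phi> \<and>
     (\<forall>g. superexp_growth g \<longrightarrow>
        (\<forall>\<epsilon>>0. ((\<lambda>x. \<phi> (g (x - \<epsilon>)) / \<phi> (g x)) \<longlongrightarrow> 0) at_top))"

end

theory Submission
  imports Defs
begin

text \<open>If \<open>f \<sim> \<phi>\<close> with \<open>\<phi>\<close> increasing, then for large \<open>a\<close> and \<open>b \<ge> 2a\<close> the primitive
  \<open>F(x) = \<integral>\<^sub>0\<^sup>x f\<close> satisfies \<open>F(a) \<le> F(A) + 2a\<phi>(a)\<close> and \<open>F(b) \<ge> \<integral>\<^bsub>b/2\<^esub>\<^bsup>b\<^esup> f \<ge> b\<phi>(a)/4\<close>,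
  so \<open>F(a)/F(b) \<le> c/b + 8a/b\<close>. Taking \<open>a = g(x - \<epsilon>)\<close> and \<open>b = g(x)\<close> for a superexponentially
  growing \<open>g\<close>, both terms tend to \<open>0\<close>.\<close>

lemma integral_nonneg_of_pos:
  fixes f :: "real \<Rightarrow> real"
  assumes pos: "\<And>x. x > 0 \<Longrightarrow> f x > 0" and int: "f integrable_on {0..c}"
  shows "integral {0..c} f \<ge> 0"
proof -
  have eq: "integral {0..c} f = integral {0..c} (\<lambda>x. \<bar>f x\<bar>)"
    by (rule integral_spike[of "{0}"])
      (simp, metis Diff_iff abs_of_pos atLeastAtMost_iff insertI1 less_eq_real_def pos)
  have "(\<lambda>x. \<bar>f x\<bar>) integrable_on {0..c}"
    by (rule integrable_spike[OF int, of "{0}"]) (auto intro!: abs_of_pos pos)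
  then show ?thesis unfolding eq by (rule integral_nonneg) auto
qed

lemma integral_pos_of_pos_cont:
  fixes f :: "real \<Rightarrow> real"
  assumes cont: "continuous_on {0<..} f" and pos: "\<And>x. x > 0 \<Longrightarrow> f x > 0"
    and int: "f integrable_on {c..d}" and c: "0 < c" "c < d"
  shows "integral {c..d} f > 0"
proof -
  have "continuous_on {c..d} f" by (rule continuous_on_subset[OF cont]) (use c in auto)
  then obtain x0 where x0: "x0 \<in> {c..d}" "\<And>y. y \<in> {c..d} \<Longrightarrow> f x0 \<le> f y"
    using continuous_attains_inf[of "{c..d}" f] c by auto
  have "0 < (d - c) * f x0" using x0 c pos[of x0] by simp
  also have "\<dots> = integral {c..d} (\<lambda>x. f x0)" using c by simp
  also have "\<dots> \<le> integral {c..d} f"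
    by (rule integral_le) (use x0 int in auto)
  finally show ?thesis .
qed

lemma integral_combine_from_0:
  fixes f :: "real \<Rightarrow> real"
  assumes "f integrable_on {0..b}" "0 \<le> a" "a \<le> b"
  shows "integral {0..b} f = integral {0..a} f + integral {a..b} f"
  using Henstock_Kurzweil_Integration.integral_combine[OF assms(2,3,1)] by simp

lemma pos_cont_indefinite_integral:
  fixes f :: "real \<Rightarrow> real"
  assumes "pos_cont f" and int: "\<And>x. x > 0 \<Longrightarrow> f integrable_on {0..x}"
  shows "pos_cont (\<lambda>x. integral {0..x} f)"
proof -
  have cont: "continuous_on {0<..} f" and pos: "\<And>x. x > 0 \<Longrightarrow> f x > 0"
    using assms(1) unfolding pos_cont_def by auto
  have "integral {0..x} f > 0" if "x > 0" for x
  proof -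
    have "integral {x/2..x} f > 0"
      by (rule integral_pos_of_pos_cont[OF cont pos integrable_subinterval_real[OF int]])
        (use that in auto)
    moreover have "integral {0..x/2} f \<ge> 0"
      by (rule integral_nonneg_of_pos[OF pos integrable_subinterval_real[OF int]])
        (use that in auto)
    ultimately show ?thesis
      using integral_combine_from_0[OF int[OF that], of "x/2"] that by simp
  qed
  moreover have "continuous_on {0<..} (\<lambda>x. integral {0..x} f)"
  proof (rule continuous_at_imp_continuous_on, rule ballI)
    fix x :: real assume "x \<in> {0<..}"
    then have "continuous_on {0..x+1} (\<lambda>x. integral {0..x} f)" "x \<in> interior {0..x+1}"
      by (auto intro: indefinite_integral_continuous_1[OF int])
    then show "isCont (\<lambda>x. integral {0..x} f) x" by (rule continuous_on_interior)
  qed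
  ultimately show ?thesis unfolding pos_cont_def by auto
qed

lemma asymp_increasing_between_halves:
  assumes "asymp_increasing f"
  obtains \<phi> A where "A > 0" "mono_on {0<..} \<phi>" "\<And>x. x > 0 \<Longrightarrow> \<phi> x > 0"
    "\<And>t. t \<ge> A \<Longrightarrow> \<phi> t / 2 \<le> f t \<and> f t \<le> 2 * \<phi> t"
proof -
  obtain \<phi> where \<phi>: "pos_cont \<phi>" "mono_on {0<..} \<phi>" "((\<lambda>x. f x / \<phi> x) \<longlongrightarrow> 1) at_top"
    using assms unfolding asymp_increasing_def by blast
  have \<phi>_pos: "\<And>x. x > 0 \<Longrightarrow> \<phi> x > 0" using \<phi>(1) unfolding pos_cont_def by auto
  have "eventually (\<lambda>x. 1/2 < f x / \<phi> x \<and> f x / \<phi> x < 2) at_top"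
    using order_tendstoD[OF \<phi>(3), of "1/2"] order_tendstoD[OF \<phi>(3), of 2]
    by (auto intro: eventually_conj)
  then obtain A0 where A0: "\<And>x. x \<ge> A0 \<Longrightarrow> 1/2 < f x / \<phi> x \<and> f x / \<phi> x < 2"
    by (auto simp: eventually_at_top_linorder)
  have "\<phi> t / 2 \<le> f t \<and> f t \<le> 2 * \<phi> t" if "t \<ge> max A0 1" for t
    using A0[of t] \<phi>_pos[of t] that by (simp add: field_simps)
  then show ?thesis using that[of "max A0 1" \<phi>] \<phi>(2) \<phi>_pos by simp
qed

lemma integral_upper_bound_mono:
  fixes f :: "real \<Rightarrow> real"
  assumes int: "f integrable_on {0..a}" and mono: "mono_on {0<..} \<phi>"
    and le: "\<And>t. A \<le> t \<Longrightarrow> f t \<le> 2 * \<phi> t" and A: "0 < A" "A \<le> a" and "\<phi> a \<ge> 0"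
  shows "integral {0..a} f \<le> integral {0..A} f + 2 * a * \<phi> a"
proof -
  have "integral {A..a} f \<le> integral {A..a} (\<lambda>t. 2 * \<phi> a)"
  proof (rule integral_le)
    show "f integrable_on {A..a}" by (rule integrable_subinterval_real[OF int]) (use A in auto)
    fix t assume t: "t \<in> {A..a}"
    then have "\<phi> t \<le> \<phi> a" using mono A by (auto simp: mono_on_def)
    then show "f t \<le> 2 * \<phi> a" using le[of t] t by simp
  qed (rule integrable_const_ivl)
  also have "\<dots> \<le> 2 * a * \<phi> a" using A \<open>\<phi> a \<ge> 0\<close> by (simp add: algebra_simps)
  finally show ?thesis using integral_combine_from_0[OF int, of A] A by simp
qed

lemma integral_lower_bound_mono:
  fixes f :: "real \<Rightarrow> real"
  assumes pos: "\<And>x. x > 0 \<Longrightarrow> f x > 0" and int: "f integrable_on {0..b}"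
    and mono: "mono_on {0<..} \<phi>" and ge: "\<And>t. A \<le> t \<Longrightarrow> \<phi> t / 2 \<le> f t"
    and ab: "A \<le> a" "0 < a" "2 * a \<le> b"
  shows "b * \<phi> a / 4 \<le> integral {0..b} f"
proof -
  have "b/2 * (\<phi> a / 2) = integral {b/2..b} (\<lambda>t. \<phi> a / 2)" using ab by simp
  also have "\<dots> \<le> integral {b/2..b} f"
  proof (rule integral_le)
    show "f integrable_on {b/2..b}" by (rule integrable_subinterval_real[OF int]) (use ab in auto)
    fix t assume t: "t \<in> {b/2..b}"
    then have "\<phi> a \<le> \<phi> t" using mono ab by (auto simp: mono_on_def)
    then show "\<phi> a / 2 \<le> f t" using ge[of t] t ab by simp
  qed (rule integrable_const_ivl)
  finally show ?thesis
    using integral_combine_from_0[OF int, of "b/2"]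
      integral_nonneg_of_pos[OF pos integrable_subinterval_real[OF int, of 0 "b/2"]] ab
    by simp
qed

lemma asymp_increasing_integral_ratio_bound:
  fixes f :: "real \<Rightarrow> real"
  assumes "pos_cont f" and int: "\<And>x. x > 0 \<Longrightarrow> f integrable_on {0..x}"
    and "asymp_increasing f"
  obtains A c where "A > 0"
    "\<And>a b. A \<le> a \<Longrightarrow> 2 * a \<le> b \<Longrightarrow>
       integral {0..a} f / integral {0..b} f \<le> c / b + 8 * (a / b)"
proof -
  define F where "F x = integral {0..x} f" for x
  have pos: "\<And>x. x > 0 \<Longrightarrow> f x > 0" using assms(1) unfolding pos_cont_def by auto
  obtain \<phi> A where A: "A > 0" and mono: "mono_on {0<..} \<phi>"
    and \<phi>_pos: "\<And>x. x > 0 \<Longrightarrow> \<phi> x > 0"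
    and bounds: "\<And>t. t \<ge> A \<Longrightarrow> \<phi> t / 2 \<le> f t \<and> f t \<le> 2 * \<phi> t"
    using asymp_increasing_between_halves[OF assms(3)] by metis
  have FA: "F A \<ge> 0" unfolding F_def using integral_nonneg_of_pos[OF pos int] A by simp
  have ratio: "F a / F b \<le> (4 * F A / \<phi> A) / b + 8 * (a / b)" if ab: "A \<le> a" "2 * a \<le> b" for a b
  proof -
    have a: "a > 0" "\<phi> a > 0" "\<phi> A > 0" using ab A \<phi>_pos by auto
    have upper: "F a \<le> F A + 2 * a * \<phi> a" unfolding F_def
      using integral_upper_bound_mono[OF int mono] bounds ab A a by simp
    have lower: "b * \<phi> a / 4 \<le> F b" unfolding F_def
      by (rule integral_lower_bound_mono[OF pos int mono]) (use bounds ab a in auto)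
    have "b * \<phi> A \<le> b * \<phi> a"
      using mono ab a A by (intro mult_left_mono) (auto simp: mono_on_def)
    then have lower_A: "b * \<phi> A / 4 \<le> F b" using lower by linarith
    have "0 < b * \<phi> a / 4" using a ab by simp
    then have Fb: "F b > 0" using lower by linarith
    have "F a / F b \<le> F A / F b + 2 * a * \<phi> a / F b"
      using upper Fb by (simp add: add_divide_distrib[symmetric] divide_right_mono)
    also have "F A / F b \<le> F A / (b * \<phi> A / 4)"
      by (rule divide_left_mono) (use FA lower_A a ab Fb in auto)
    also have "2 * a * \<phi> a / F b \<le> 2 * a * \<phi> a / (b * \<phi> a / 4)"
      by (rule divide_left_mono) (use lower a ab Fb in auto)
    also have "F A / (b * \<phi> A / 4) + 2 * a * \<phi> a / (b * \<phi> a / 4)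
        = (4 * F A / \<phi> A) / b + 8 * (a / b)"
      using a ab by (simp add: field_simps)
    finally show ?thesis by simp
  qed
  show ?thesis
    by (rule that[OF A ratio[unfolded F_def]])
qed

lemma preserves_superexp_of_ratio_bound:
  assumes F: "pos_cont F" and "A > 0"
    and bound: "\<And>a b. A \<le> a \<Longrightarrow> 2 * a \<le> b \<Longrightarrow> F a / F b \<le> c / b + C * (a / b)"
  shows "preserves_superexp F"
proof -
  have F_pos: "\<And>x. x > 0 \<Longrightarrow> F x > 0" using F unfolding pos_cont_def by auto
  have "((\<lambda>x. F (g (x - \<epsilon>)) / F (g x)) \<longlongrightarrow> 0) at_top"
    if g: "superexp_growth g" and "\<epsilon> > 0" for g \<epsilon>
  proof -
    have g_lim: "filterlim g at_top at_top"
      and g_ratio: "((\<lambda>x. g (x - \<epsilon>) / g x) \<longlongrightarrow> 0) at_top"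
      using g \<open>\<epsilon> > 0\<close> unfolding superexp_growth_def by auto
    have "filterlim (\<lambda>x. -\<epsilon> + x) at_top at_top"
      by (rule filterlim_tendsto_add_at_top[OF tendsto_const filterlim_ident])
    then have "filterlim (\<lambda>x. g (x - \<epsilon>)) at_top at_top"
      using filterlim_compose[OF g_lim] by simp
    then have "eventually (\<lambda>x. A \<le> g (x - \<epsilon>)) at_top" by (simp add: filterlim_at_top)
    moreover have "eventually (\<lambda>x. g (x - \<epsilon>) / g x < 1/2) at_top"
      using order_tendstoD(2)[OF g_ratio, of "1/2"] by simp
    moreover have "eventually (\<lambda>x. 0 < g x) at_top"
      using filterlim_at_top_dense g_lim by blast
    ultimately have bounded: "eventually (\<lambda>x. 0 \<le> F (g (x - \<epsilon>)) / F (g x) \<and>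
        F (g (x - \<epsilon>)) / F (g x) \<le> c / g x + C * (g (x - \<epsilon>) / g x)) at_top"
    proof eventually_elim
      case (elim x)
      then have "2 * g (x - \<epsilon>) \<le> g x" by (simp add: field_simps)
      then show ?case
        using bound[OF elim(1)] F_pos[of "g x"] F_pos[of "g (x - \<epsilon>)"] elim \<open>A > 0\<close>
        by simp
    qed
    have "((\<lambda>x. c / g x + C * (g (x - \<epsilon>) / g x)) \<longlongrightarrow> 0) at_top"
      by (intro tendsto_add_zero tendsto_divide_0[OF tendsto_const]
          filterlim_at_top_imp_at_infinity[OF g_lim] tendsto_mult_right_zero g_ratio)
    with bounded[unfolded eventually_conj_iff] show ?thesis
      by (elim conjE tendsto_sandwich[OF _ _ tendsto_const])
  qed
  then show ?thesis using F unfolding preserves_superexp_def by blast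
qed

theorem corollary1:
  fixes f :: "real \<Rightarrow> real"
  assumes "pos_cont f"
    and "\<And>x. x > 0 \<Longrightarrow> f integrable_on {0..x}"
    and "asymp_increasing f"
    and "filterlim (\<lambda>x. f x / x) at_top at_top"
  shows "preserves_superexp (\<lambda>x. integral {0..x} f)"
proof -
  obtain A c where "A > 0" and bound: "\<And>a b. A \<le> a \<Longrightarrow> 2 * a \<le> b \<Longrightarrow>
      integral {0..a} f / integral {0..b} f \<le> c / b + 8 * (a / b)"
    using asymp_increasing_integral_ratio_bound[OF assms(1-3)] by metis
  show ?thesis
    by (rule preserves_superexp_of_ratio_bound[OF pos_cont_indefinite_integral[OF assms(1,2)]
          \<open>A > 0\<close> bound])
qed

end
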